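(* Assume $s>d$, and let $R^*$ have the distribution of $R$, independent of $X^{(n)}$. Then $$\lim_{n\to\infty}\mathbb{P}\big(o\text{ is isolated in }G(X^{(n)}\cup\{(o,R^* )\})\big)>0.$$
   Context: Fix an integer $d\ge2$. For $n\ge1$, $\mathbb{T}_n$ is the torus obtained from $[-n/2,n/2]^d$ by identifying opposite faces, with toroidal distance ${\rm d}_{\mathbb{T}_n}$, origin $o$, and $B^{\mathbb{T}_n}_r(\xi)=\{\eta\in\mathbb{T}_n:{\rm d}_{\mathbb{T}_n}(\xi,\eta)\le r\}$. $R$ is a nonnegative random variable with absolutely continuous distribution such that $\lim_{h\to\infty}h^s\mathbb{P}(R>h)=\beta$ for some $\beta,s\in(0,\infty)$. $X^{(n)}$ is a homogeneous Poisson point process of intensity $1$ on $\mathbb{T}_n$, each point independently marked with a mark in $[0,\infty)$ distributed as $R$ (points written $(\xi,r)$). For a finite set $\varphi\subset\mathbb{T}_n\times[0,\infty)$, $G(\varphi)$ is the graph on $\varphi$ with a directed edge from $(\xi,r)$ to $(\eta,t)$ whenever $\eta\in B^{\mathbb{T}_n}_r(\xi)$. "$o$ is isolated" means the vertex $(o,R^* )$ has no incoming and no outgoing edges. *)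

theory Defs
  imports "HOL-Probability.Probability"
begin

text \<open>The torus T_n is represented by the fundamental domain [-n/2,n/2)^d of real^'d,
  where the finite type 'd has CARD('d) = d elements.\<close>

definition torus_box :: "nat \<Rightarrow> (real^'d) set" where
  "torus_box n = {x. \<forall>i. - real n / 2 \<le> x $ i \<and> x $ i < real n / 2}"

definition circ_dist :: "nat \<Rightarrow> real \<Rightarrow> real \<Rightarrow> real" where
  "circ_dist n a b = Inf {\<bar>a - b - of_int k * real n\<bar> | k. True}"

definition torus_dist :: "nat \<Rightarrow> real^'d \<Rightarrow> real^'d \<Rightarrow> real" where
  "torus_dist n x y = sqrt (\<Sum>i\<in>UNIV. (circ_dist n (x $ i) (y $ i))^2)"

definition edge :: "nat \<Rightarrow> ((real^'d) \<times> real) set \<Rightarrow> ((real^'d) \<times> real) \<Rightarrow> ((real^'d) \<times> real) \<Rightarrow> bool" where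
  "edge n \<phi> v w \<longleftrightarrow> v \<in> \<phi> \<and> w \<in> \<phi> \<and> v \<noteq> w \<and> torus_dist n (fst v) (fst w) \<le> snd v"

definition isolated :: "nat \<Rightarrow> ((real^'d) \<times> real) set \<Rightarrow> ((real^'d) \<times> real) \<Rightarrow> bool" where
  "isolated n \<phi> v \<longleftrightarrow> v \<in> \<phi> \<and> (\<forall>w. \<not> edge n \<phi> v w \<and> \<not> edge n \<phi> w v)"

definition marked_point :: "nat \<Rightarrow> real measure \<Rightarrow> ((real^'d) \<times> real) measure" where
  "marked_point n \<mu> = uniform_measure lborel (torus_box n) \<Otimes>\<^sub>M \<mu>"

text \<open>Probability that the independently marked homogeneous Poisson process of intensity 1
  on T_n (volume n^d) has a configuration in the event E: a Poisson(n^d) number of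
  i.i.d. marked points.\<close>
definition ppp_prob :: "'d::finite itself \<Rightarrow> nat \<Rightarrow> real measure \<Rightarrow> (((real^'d) \<times> real) set \<Rightarrow> bool) \<Rightarrow> real" where
  "ppp_prob _ n \<mu> E =
     (\<Sum>k. exp (- (real n ^ CARD('d))) * (real n ^ CARD('d)) ^ k / fact k *
        measure (PiM {..<k} (\<lambda>_. marked_point n \<mu> :: ((real^'d) \<times> real) measure))
          {f \<in> space (PiM {..<k} (\<lambda>_. marked_point n \<mu> :: ((real^'d) \<times> real) measure)).
             E (f ` {..<k})})"

definition iso_prob :: "'d::finite itself \<Rightarrow> nat \<Rightarrow> real measure \<Rightarrow> real" where
  "iso_prob d n \<mu> =
     (\<integral>r. ppp_prob d n \<mu> (\<lambda>\<phi>. isolated n (\<phi> \<union> {(0 :: real^'d, r)}) (0, r)) \<partial>\<mu>)"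

end

theory Submission
  imports Defs
begin

text \<open>
  Conditionally on the mark \<open>R* = r\<close>, the origin is isolated iff no point of the Poisson
  process lies in the set of marked points linked to \<open>(o, r)\<close>; by the void probability of a
  Poisson process this happens with probability \<open>exp (- \<Lambda>\<^sub>n r)\<close>, where
  \<open>\<Lambda>\<^sub>n r = \<integral>\<^bsub>T\<^sub>n\<^esub> P(|x| \<le> r \<or> |x| \<le> R) dx\<close> (on the fundamental box the toroidal
  distance to \<open>o\<close> is the Euclidean norm). The boxes grow with \<open>n\<close>, so \<open>\<Lambda>\<^sub>n r\<close> increases and
  the isolation probability decreases, hence converges. Since \<open>s > d\<close> the moment
  \<open>E R\<^sup>d\<close> is finite, and \<open>\<Lambda>\<^sub>n r \<le> \<kappa>\<^sub>d r\<^sup>d + \<kappa>\<^sub>d E R\<^sup>d\<close> uniformly in \<open>n\<close>, which bounds the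
  limit below by \<open>E exp (- \<kappa>\<^sub>d R\<^sup>d - \<kappa>\<^sub>d E R\<^sup>d) > 0\<close>.
\<close>

lemma (in prob_space) measure_PiM_image_subset:
  assumes "finite I" and "A \<in> events"
  shows "measure (PiM I (\<lambda>_. M)) {f \<in> space (PiM I (\<lambda>_. M)). f ` I \<subseteq> A} = prob A ^ card I"
proof -
  interpret product_sigma_finite "\<lambda>_. M" by unfold_locales
  have "{f \<in> space (PiM I (\<lambda>_. M)). f ` I \<subseteq> A} = PiE I (\<lambda>_. A)"
    using sets.sets_into_space[OF assms(2)] by (auto simp: space_PiM PiE_iff image_subset_iff intro: extensional_arb)
  moreover have "emeasure (PiM I (\<lambda>_. M)) (PiE I (\<lambda>_. A)) = (\<Prod>i\<in>I. emeasure M A)"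
    using assms by (intro emeasure_PiM) simp_all
  ultimately have "emeasure (PiM I (\<lambda>_. M)) {f \<in> space (PiM I (\<lambda>_. M)). f ` I \<subseteq> A} = ennreal (prob A ^ card I)"
    by (simp add: emeasure_eq_measure ennreal_power)
  then show ?thesis by (simp add: measure_def)
qed

lemma (in prob_space) integral_pos:
  fixes f :: "'a \<Rightarrow> real"
  assumes "integrable M f" and "\<And>x. x \<in> space M \<Longrightarrow> f x > 0"
  shows "(\<integral>x. f x \<partial>M) > 0"
proof -
  have nonneg: "AE x in M. 0 \<le> f x" by (rule AE_I2) (metis assms(2) less_imp_le)
  have "(\<integral>x. f x \<partial>M) \<noteq> 0"
  proof
    assume "(\<integral>x. f x \<partial>M) = 0"
    then have "AE x in M. f x = 0" using integral_nonneg_eq_0_iff_AE[OF assms(1) nonneg] by simp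
    moreover have "AE x in M. f x \<noteq> 0" by (rule AE_I2) (metis assms(2) less_irrefl)
    ultimately have "AE x in M. False" by eventually_elim simp
    then show False by (simp add: AE_False)
  qed
  moreover have "(\<integral>x. f x \<partial>M) \<ge> 0" using integral_nonneg_AE[OF nonneg] .
  ultimately show ?thesis by simp
qed

lemma dyadic_interval:
  fixes x :: real
  assumes "x > 1"
  obtains j :: nat where "2 ^ j < x" and "x \<le> 2 ^ Suc j"
proof
  define l where "l = log 2 x"
  have "l > 0" using assms by (simp add: l_def)
  then have j: "real (nat (\<lceil>l\<rceil> - 1)) = of_int \<lceil>l\<rceil> - 1"
    by (simp add: of_nat_nat)
  have x: "x = 2 powr l" using assms by (simp add: l_def)
  show "2 ^ nat (\<lceil>l\<rceil> - 1) < x"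
    unfolding x powr_realpow[of 2, symmetric, simplified] j
    using ceiling_correct[of l] by simp
  show "x \<le> 2 ^ Suc (nat (\<lceil>l\<rceil> - 1))"
    unfolding x powr_realpow[of 2, symmetric, simplified] by (simp add: j)
qed

lemma power_le_dyadic_sum:
  fixes t h :: real and D :: nat
  assumes "h > 0" and "t \<ge> 0"
  shows "ennreal (t ^ D)
    \<le> ennreal (h ^ D) + (\<Sum>j. ennreal ((2 ^ Suc j * h) ^ D) * indicator {2 ^ j * h<..} t)"
proof (cases "t \<le> h")
  case True
  then have "ennreal (t ^ D) \<le> ennreal (h ^ D)"
    using assms by (intro ennreal_leI power_mono) auto
  then show ?thesis by (simp add: add_increasing2)
next
  case False
  then obtain j where j: "2 ^ j < t / h" "t / h \<le> 2 ^ Suc j"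
    using dyadic_interval[of "t / h"] assms by auto
  have "2 ^ j * h < t" "t \<le> 2 ^ Suc j * h"
    using j assms by (simp_all add: field_simps)
  then have "ennreal (t ^ D) \<le> ennreal ((2 ^ Suc j * h) ^ D) * indicator {2 ^ j * h<..} t"
    using assms by (auto intro!: ennreal_leI power_mono)
  also have "\<dots> = (\<Sum>i\<in>{j}. ennreal ((2 ^ Suc i * h) ^ D) * indicator {2 ^ i * h<..} t)"
    by (subst sum.insert) simp_all
  also have "\<dots> \<le> (\<Sum>i. ennreal ((2 ^ Suc i * h) ^ D) * indicator {2 ^ i * h<..} t)"
    by (rule sum_le_suminf) auto
  finally show ?thesis by (simp add: add_increasing)
qed

lemma dyadic_tail_le:
  fixes \<mu> :: "real measure" and D :: nat
  assumes "h > 0" and "\<And>x. x \<ge> h \<Longrightarrow> x powr s * measure \<mu> {x<..} \<le> C"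
  shows "(2 ^ Suc j * h) ^ D * measure \<mu> {2 ^ j * h<..}
    \<le> C * 2 ^ D * h powr (real D - s) * (2 powr (real D - s)) ^ j"
proof -
  let ?x = "2 ^ j * h"
  have "?x \<ge> h" and "?x > 0" and "?x powr s > 0" using assms(1) by simp_all
  then have "measure \<mu> {?x<..} \<le> C / ?x powr s"
    using assms(2)[of ?x] by (simp add: pos_le_divide_eq mult.commute)
  then have "measure \<mu> {?x<..} \<le> C * ?x powr - s"
    by (simp add: powr_minus divide_inverse)
  then have "(2 ^ Suc j * h) ^ D * measure \<mu> {?x<..} \<le> (2 ^ Suc j * h) ^ D * (C * ?x powr - s)"
    using assms(1) by (intro mult_left_mono) simp_all
  also have "\<dots> = C * 2 ^ D * ?x powr (real D - s)"
    using \<open>?x > 0\<close> by (simp add: powr_diff powr_realpow power_mult_distrib powr_minus field_simps)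
  also have "\<dots> = C * 2 ^ D * h powr (real D - s) * (2 powr (real D - s)) ^ j"
    using assms(1) by (simp add: powr_mult powr_powr powr_realpow[symmetric] mult.commute mult.left_commute)
  finally show ?thesis .
qed

lemma nn_integral_power_finite:
  fixes \<mu> :: "real measure" and D :: nat
  assumes "finite_measure \<mu>" and sets_eq: "sets \<mu> = sets borel" and "AE t in \<mu>. t \<ge> 0"
    and tail: "eventually (\<lambda>h. h powr s * measure \<mu> {h<..} \<le> C) at_top"
    and "real D < s"
  shows "(\<integral>\<^sup>+t. ennreal (\<bar>t\<bar> ^ D) \<partial>\<mu>) < \<infinity>"
proof -
  \<comment> \<open>On the dyadic shells \<open>(2\<^sup>j h, 2\<^sup>j\<^sup>+\<^sup>1 h]\<close> the tail bound makes the contributions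
    geometric with ratio \<open>2 powr (D - s) < 1\<close>.\<close>
  interpret finite_measure \<mu> by fact
  obtain h where "h \<ge> 1" and h: "\<And>x. x \<ge> h \<Longrightarrow> x powr s * measure \<mu> {x<..} \<le> C"
    using tail eventually_ge_at_top[of 1] unfolding eventually_at_top_linorder
    by (metis (no_types, lifting) linorder_le_cases order_trans)
  then have "h > 0" by simp
  have "C \<ge> 0" using h[of h] by (smt (verit) measure_nonneg powr_ge_zero zero_le_mult_iff)
  define q where "q = (2::real) powr (real D - s)"
  define K where "K = C * 2 ^ D * h powr (real D - s)"
  have q: "0 \<le> q" "q < 1" using assms(5) by (simp_all add: q_def powr_less_one)
  have [measurable]: "{x<..} \<in> sets \<mu>" for x :: real by (simp add: sets_eq)
  have dyadic_term: "ennreal ((2 ^ Suc j * h) ^ D) * emeasure \<mu> {2 ^ j * h<..} \<le> ennreal (K * q ^ j)" for j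
    using dyadic_tail_le[OF \<open>h > 0\<close> h, of j D] \<open>h > 0\<close> unfolding K_def q_def
    by (simp add: emeasure_eq_measure ennreal_leI flip: ennreal_mult')
  have "(\<integral>\<^sup>+t. ennreal (\<bar>t\<bar> ^ D) \<partial>\<mu>)
      \<le> (\<integral>\<^sup>+t. ennreal (h ^ D) + (\<Sum>j. ennreal ((2 ^ Suc j * h) ^ D) * indicator {2 ^ j * h<..} t) \<partial>\<mu>)"
    using assms(3) power_le_dyadic_sum[OF \<open>h > 0\<close>, of _ D]
    by (intro nn_integral_mono_AE) (auto elim!: eventually_mono simp del: power_Suc)
  also have "\<dots> = ennreal (h ^ D) * emeasure \<mu> (space \<mu>)
      + (\<Sum>j. ennreal ((2 ^ Suc j * h) ^ D) * emeasure \<mu> {2 ^ j * h<..})"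
    by (simp add: nn_integral_add nn_integral_suminf nn_integral_cmult_indicator)
  also have "\<dots> \<le> ennreal (h ^ D) * emeasure \<mu> (space \<mu>) + (\<Sum>j. ennreal (K * q ^ j))"
    by (intro add_left_mono suminf_le dyadic_term) auto
  also have "(\<Sum>j. ennreal (K * q ^ j)) = ennreal (\<Sum>j. K * q ^ j)"
    using q \<open>C \<ge> 0\<close> by (intro suminf_ennreal2) (auto simp: K_def)
  finally show ?thesis
    by (rule le_less_trans) (simp add: emeasure_eq_measure less_top[symmetric] ennreal_mult_eq_top_iff)
qed

lemma emeasure_cball_le: "emeasure lborel (cball (c::'a::euclidean_space) t) \<le> unit_ball_vol DIM('a) * \<bar>t\<bar> ^ DIM('a)"
  by (cases "t \<ge> 0") (simp_all add: emeasure_cball)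

lemma norm_le_snd_sets:
  assumes "sets \<mu> = sets borel"
  shows "{p :: 'a::euclidean_space \<times> real. norm (fst p) \<le> snd p} \<in> sets (lborel \<Otimes>\<^sub>M \<mu>)"
proof -
  have eq: "sets (lborel \<Otimes>\<^sub>M \<mu>) = sets (borel \<Otimes>\<^sub>M (borel :: real measure))"
    using assms by (intro sets_pair_measure_cong) simp_all
  have "{p \<in> space (borel \<Otimes>\<^sub>M borel). norm (fst (p :: 'a \<times> real)) \<le> snd p} \<in> sets (borel \<Otimes>\<^sub>M borel)"
    by measurable
  then show ?thesis unfolding eq by (simp add: space_pair_measure)
qed

lemma nn_integral_emeasure_tail:
  fixes \<mu> :: "real measure"
  assumes "sigma_finite_measure \<mu>" and "sets \<mu> = sets borel"
  shows "(\<integral>\<^sup>+x. emeasure \<mu> {t. norm (x::'a::euclidean_space) \<le> t} \<partial>lborel)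
    = (\<integral>\<^sup>+t. emeasure lborel (cball (0::'a) t) \<partial>\<mu>)"
proof -
  interpret pair_sigma_finite "lborel :: 'a measure" \<mu>
    using assms(1) by (simp add: pair_sigma_finite_def lborel.sigma_finite_measure_axioms)
  note S = norm_le_snd_sets[OF assms(2), where 'a='a]
  have "(\<lambda>x. (x, t)) -` {p :: 'a \<times> real. norm (fst p) \<le> snd p} = cball 0 t" for t
    by (auto simp: dist_norm)
  then show ?thesis
    using M2.emeasure_pair_measure_alt[OF S] emeasure_pair_measure_alt2[OF S] by (simp add: vimage_def)
qed

lemma abs_sub_of_int_minimal:
  fixes w :: real
  assumes "\<bar>w - of_int m\<bar> \<le> 1/2"
  shows "\<bar>w - of_int m\<bar> \<le> \<bar>w - of_int k\<bar>"
proof (cases "k = m")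
  case False
  then have "1 \<le> \<bar>k - m\<bar>" by linarith
  then have "(1::real) \<le> \<bar>of_int k - of_int m\<bar>"
    by (metis of_int_1_le_iff of_int_abs of_int_diff)
  then show ?thesis using assms by linarith
qed simp

lemma circ_dist_eq:
  assumes "n > 0" and "\<bar>(a - b) / real n - of_int m\<bar> \<le> 1/2"
  shows "circ_dist n a b = \<bar>a - b - of_int m * real n\<bar>"
proof -
  have scale: "\<bar>a - b - of_int k * real n\<bar> = \<bar>(a - b) / real n - of_int k\<bar> * real n" for k
    using assms(1) by (simp add: abs_mult[symmetric] field_simps)
  have "\<bar>a - b - of_int m * real n\<bar> \<le> \<bar>a - b - of_int k * real n\<bar>" for k
    unfolding scale using abs_sub_of_int_minimal[OF assms(2), of k] by (simp add: mult_right_mono)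
  then show ?thesis
    unfolding circ_dist_def by (intro cInf_eq_minimum) auto
qed

lemma circ_dist_round:
  "n > 0 \<Longrightarrow> circ_dist n a b = \<bar>a - b - of_int (round ((a - b) / real n)) * real n\<bar>"
  using of_int_round_abs_le[of "(a - b) / real n"] by (intro circ_dist_eq) (simp_all add: abs_minus_commute)

lemma circ_dist_zero:
  assumes "n > 0" and "\<bar>a\<bar> \<le> real n / 2"
  shows "circ_dist n 0 a = \<bar>a\<bar>" and "circ_dist n a 0 = \<bar>a\<bar>"
  using circ_dist_eq[of n _ _ 0] assms by simp_all

lemma torus_dist_zero:
  fixes x :: "real^'d"
  assumes "n > 0" and "x \<in> torus_box n"
  shows "torus_dist n 0 x = norm x" and "torus_dist n x 0 = norm x"
proof -
  have "\<bar>x $ i\<bar> \<le> real n / 2" for i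
  proof -
    have "- real n / 2 \<le> x $ i \<and> x $ i < real n / 2"
      using assms(2) unfolding torus_box_def by blast
    then show ?thesis by linarith
  qed
  then show "torus_dist n 0 x = norm x" "torus_dist n x 0 = norm x"
    unfolding torus_dist_def norm_vec_def L2_set_def using circ_dist_zero[OF assms(1)] by simp_all
qed

lemma measurable_round [measurable]: "(round :: real \<Rightarrow> int) \<in> borel \<rightarrow>\<^sub>M count_space UNIV"
  unfolding round_def by measurable

lemma borel_measurable_torus_dist:
  fixes f g :: "'a \<Rightarrow> real^'d"
  assumes "n > 0" and [measurable]: "f \<in> borel_measurable M" "g \<in> borel_measurable M"
  shows "(\<lambda>x. torus_dist n (f x) (g x)) \<in> borel_measurable M"
proof -
  have [measurable]: "(\<lambda>x. f x $ i) \<in> borel_measurable M" "(\<lambda>x. g x $ i) \<in> borel_measurable M" for i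
    by (simp_all add: measurable_compose[OF _ borel_measurable_nth])
  show ?thesis
    unfolding torus_dist_def circ_dist_round[OF assms(1)] by measurable
qed

lemma torus_box_sets [measurable]: "torus_box n \<in> sets (borel :: (real^'d) measure)"
  unfolding torus_box_def by measurable

lemma torus_box_mono:
  assumes "m \<le> n"
  shows "torus_box m \<subseteq> torus_box n"
proof
  fix x :: "real^'d"
  assume x: "x \<in> torus_box m"
  have "- real n / 2 \<le> x $ i \<and> x $ i < real n / 2" for i
  proof -
    have "- real m / 2 \<le> x $ i \<and> x $ i < real m / 2"
      using x unfolding torus_box_def by blast
    with assms show ?thesis by linarith
  qed
  then show "x \<in> torus_box n" unfolding torus_box_def by blast
qed

lemma emeasure_torus_box: "emeasure lborel (torus_box n :: (real^'d) set) = real n ^ CARD('d)"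
proof -
  let ?a = "vec (- (real n / 2)) :: real^'d" and ?b = "vec (real n / 2) :: real^'d"
  have "box ?a ?b \<subseteq> torus_box n" "torus_box n \<subseteq> cbox ?a ?b"
    unfolding torus_box_def by (auto simp: mem_box_cart less_imp_le)
  then have "emeasure lborel (box ?a ?b) \<le> emeasure lborel (torus_box n :: (real^'d) set)"
    and "emeasure lborel (torus_box n :: (real^'d) set) \<le> emeasure lborel (cbox ?a ?b)"
    by (simp_all add: emeasure_mono)
  moreover have "emeasure lborel (cbox ?a ?b) = real n ^ CARD('d)"
  proof -
    have "cbox ?a ?b \<noteq> {}" by (auto simp: mem_box_cart intro!: exI[of _ 0])
    then show ?thesis
      using emeasure_lborel_cbox_finite[of ?a ?b]
      by (simp add: emeasure_eq_ennreal_measure content_cbox_cart)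
  qed
  ultimately show ?thesis
    by (simp add: emeasure_lborel_box_eq emeasure_lborel_cbox_eq)
qed

text \<open>Expected number of marked points in \<open>S\<close> linked to \<open>(o, r)\<close>: a point at \<open>x\<close> with mark \<open>t\<close>
  is linked iff \<open>|x| \<le> r\<close> or \<open>|x| \<le> t\<close>.\<close>
definition link_mass :: "real measure \<Rightarrow> real \<Rightarrow> 'a::euclidean_space set \<Rightarrow> ennreal" where
  "link_mass \<mu> r S = (\<integral>\<^sup>+x\<in>S. emeasure \<mu> {t. norm x \<le> r \<or> norm x \<le> t} \<partial>lborel)"

lemma link_mass_mono:
  assumes "sets \<mu> = sets borel" and "r \<le> r'" and "S \<subseteq> S'"
  shows "link_mass \<mu> r S \<le> link_mass \<mu> r' S'"
  unfolding link_mass_def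
proof (intro nn_integral_mono mult_mono emeasure_mono)
  fix x :: 'a
  have "{t \<in> space borel. norm x \<le> r' \<or> norm x \<le> t} \<in> sets borel" by measurable
  then show "{t. norm x \<le> r' \<or> norm x \<le> t} \<in> sets \<mu>" by (simp add: assms(1))
  show "indicator S x \<le> (indicator S' x :: ennreal)"
    using assms(3) by (auto split: split_indicator)
qed (use assms(2) in auto)

lemma link_mass_le_emeasure:
  assumes "prob_space \<mu>" and "S \<in> sets borel"
  shows "link_mass \<mu> r S \<le> emeasure lborel S"
proof -
  have "link_mass \<mu> r S \<le> (\<integral>\<^sup>+x. indicator S x \<partial>lborel)"
    unfolding link_mass_def
    by (intro nn_integral_mono) (auto simp: indicator_def prob_space.emeasure_le_1[OF assms(1)])
  then show ?thesis using assms(2) by simp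
qed

lemma link_mass_le:
  fixes \<mu> :: "real measure" and S :: "'a::euclidean_space set"
  assumes "prob_space \<mu>" and "sets \<mu> = sets borel"
  shows "link_mass \<mu> r S \<le> unit_ball_vol DIM('a) * \<bar>r\<bar> ^ DIM('a)
    + (\<integral>\<^sup>+t. unit_ball_vol DIM('a) * \<bar>t\<bar> ^ DIM('a) \<partial>\<mu>)"
proof -
  interpret prob_space \<mu> by fact
  let ?tail = "\<lambda>x::'a. emeasure \<mu> {t. norm x \<le> t}"
  have "link_mass \<mu> r S \<le> (\<integral>\<^sup>+x. indicator (cball 0 \<bar>r\<bar>) x + ?tail x \<partial>lborel)"
    unfolding link_mass_def
  proof (intro nn_integral_mono)
    fix x :: 'a
    show "emeasure \<mu> {t. norm x \<le> r \<or> norm x \<le> t} * indicator S x \<le> indicator (cball 0 \<bar>r\<bar>) x + ?tail x"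
      by (cases "norm x \<le> r") (auto simp: indicator_def emeasure_le_1 intro: add_increasing2)
  qed
  also have "\<dots> = emeasure lborel (cball (0::'a) \<bar>r\<bar>) + (\<integral>\<^sup>+t. emeasure lborel (cball (0::'a) t) \<partial>\<mu>)"
  proof -
    have "?tail \<in> borel_measurable lborel"
      using measurable_emeasure_Pair[OF norm_le_snd_sets[OF assms(2)]] by (simp add: vimage_def)
    then show ?thesis
      by (subst nn_integral_add)
        (simp_all add: nn_integral_emeasure_tail[OF _ assms(2)] borel_closed
          borel_measurable_indicator prob_space_imp_sigma_finite[OF assms(1)])
  qed
  also have "\<dots> \<le> unit_ball_vol DIM('a) * \<bar>r\<bar> ^ DIM('a)
    + (\<integral>\<^sup>+t. unit_ball_vol DIM('a) * \<bar>t\<bar> ^ DIM('a) \<partial>\<mu>)"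
    using emeasure_cball_le[of "0::'a" "\<bar>r\<bar>"] by (intro add_mono nn_integral_mono emeasure_cball_le) simp_all
  finally show ?thesis .
qed

lemma link_mass_bounded:
  fixes \<mu> :: "real measure"
  assumes "prob_space \<mu>" and "sets \<mu> = sets borel"
    and "(\<integral>\<^sup>+t. ennreal (\<bar>t\<bar> ^ DIM('a::euclidean_space)) \<partial>\<mu>) < \<infinity>"
  obtains m where "m \<ge> 0"
    and "\<And>r (S :: 'a set). enn2real (link_mass \<mu> r S) \<le> unit_ball_vol DIM('a) * \<bar>r\<bar> ^ DIM('a) + m"
proof -
  let ?\<kappa> = "unit_ball_vol DIM('a)"
  have "(\<lambda>t. ennreal (\<bar>t\<bar> ^ DIM('a))) \<in> borel_measurable \<mu>"
    unfolding measurable_cong_sets[OF assms(2) refl] by measurable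
  then have "(\<integral>\<^sup>+t. ennreal (?\<kappa> * \<bar>t\<bar> ^ DIM('a)) \<partial>\<mu>) = ?\<kappa> * (\<integral>\<^sup>+t. ennreal (\<bar>t\<bar> ^ DIM('a)) \<partial>\<mu>)"
    by (simp add: ennreal_mult nn_integral_cmult)
  then have "(\<integral>\<^sup>+t. ennreal (?\<kappa> * \<bar>t\<bar> ^ DIM('a)) \<partial>\<mu>) < \<infinity>"
    using assms(3) by (simp add: ennreal_mult_less_top)
  then obtain m where m: "(\<integral>\<^sup>+t. ennreal (?\<kappa> * \<bar>t\<bar> ^ DIM('a)) \<partial>\<mu>) = ennreal m" "m \<ge> 0"
    by (cases "\<integral>\<^sup>+t. ennreal (?\<kappa> * \<bar>t\<bar> ^ DIM('a)) \<partial>\<mu>") auto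
  show ?thesis
  proof (rule that[OF m(2)])
    fix r and S :: "'a set"
    have "0 \<le> ?\<kappa> * \<bar>r\<bar> ^ DIM('a)" by simp
    have "link_mass \<mu> r S \<le> ennreal (?\<kappa> * \<bar>r\<bar> ^ DIM('a)) + ennreal m"
      using link_mass_le[OF assms(1,2), of r S] m(1) by simp
    also have "\<dots> = ennreal (?\<kappa> * \<bar>r\<bar> ^ DIM('a) + m)"
      using m(2) by simp
    finally show "enn2real (link_mass \<mu> r S) \<le> ?\<kappa> * \<bar>r\<bar> ^ DIM('a) + m"
      using m(2) \<open>0 \<le> ?\<kappa> * \<bar>r\<bar> ^ DIM('a)\<close> by (intro enn2real_leI) simp_all
  qed
qed

text \<open>The marked points having no edge to or from \<open>(o, r)\<close>; \<open>(o, r)\<close> itself is included because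
  the configuration may already contain it.\<close>
definition isolating_points :: "nat \<Rightarrow> real \<Rightarrow> ((real^'d) \<times> real) set" where
  "isolating_points n r =
     insert (0, r) {w. r < torus_dist n 0 (fst w) \<and> snd w < torus_dist n (fst w) 0}"

lemma isolated_iff_subset_isolating_points:
  "isolated n (\<phi> \<union> {(0, r)}) (0, r) \<longleftrightarrow> \<phi> \<subseteq> isolating_points n r"
proof
  assume iso: "isolated n (\<phi> \<union> {(0, r)}) (0, r)"
  show "\<phi> \<subseteq> isolating_points n r"
  proof
    fix w assume "w \<in> \<phi>"
    show "w \<in> isolating_points n r"
    proof (cases "w = (0, r)")
      case False
      with iso \<open>w \<in> \<phi>\<close> have "\<not> edge n (\<phi> \<union> {(0, r)}) (0, r) w" "\<not> edge n (\<phi> \<union> {(0, r)}) w (0, r)"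
        unfolding isolated_def by blast+
      with False \<open>w \<in> \<phi>\<close> show ?thesis
        unfolding edge_def isolating_points_def by (simp add: not_le)
    qed (simp add: isolating_points_def)
  qed
next
  assume "\<phi> \<subseteq> isolating_points n r"
  then show "isolated n (\<phi> \<union> {(0, r)}) (0, r)"
    unfolding isolated_def edge_def isolating_points_def by (fastforce simp: not_le)
qed

lemma isolating_points_sets:
  assumes "n > 0"
  shows "isolating_points n r \<in> sets (borel \<Otimes>\<^sub>M borel)"
proof -
  note [measurable] = borel_measurable_torus_dist[OF assms]
  have "{w \<in> space (borel \<Otimes>\<^sub>M borel). r < torus_dist n 0 (fst w) \<and> snd w < torus_dist n (fst (w :: (real^'d) \<times> real)) 0}
      \<in> sets (borel \<Otimes>\<^sub>M borel)"
    by measurable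
  then have "{w. r < torus_dist n 0 (fst w) \<and> snd w < torus_dist n (fst (w :: (real^'d) \<times> real)) 0}
      \<in> sets (borel \<Otimes>\<^sub>M borel)"
    by (simp add: space_pair_measure)
  moreover have "{(0 :: real^'d, r)} \<in> sets (borel \<Otimes>\<^sub>M borel)"
    unfolding borel_prod by (rule borel_closed) simp
  ultimately show ?thesis
    unfolding isolating_points_def by (rule sets.insert_in_sets[rotated])
qed

lemma vimage_Pair_compl_isolating_points:
  assumes "n > 0" and "x \<in> torus_box n" and "x \<noteq> 0"
  shows "Pair x -` (- isolating_points n r) = {t. norm x \<le> r \<or> norm x \<le> t}"
  using assms(3) unfolding isolating_points_def by (auto simp: torus_dist_zero[OF assms(1,2)])

locale mark_law = prob_space \<mu> for \<mu> :: "real measure" +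
  assumes sets_eq_borel: "sets \<mu> = sets borel"
begin

lemma sets_marked_point: "sets (marked_point n \<mu>) = sets (borel \<Otimes>\<^sub>M borel :: ((real^'d) \<times> real) measure)"
  unfolding marked_point_def by (rule sets_pair_measure_cong) (simp, rule sets_eq_borel)

lemma space_marked_point: "space (marked_point n \<mu> :: ((real^'d) \<times> real) measure) = UNIV"
  using sets_eq_imp_space_eq[OF sets_marked_point] by (simp add: space_pair_measure)

lemma prob_space_marked_point:
  assumes "n > 0"
  shows "prob_space (marked_point n \<mu> :: ((real^'d) \<times> real) measure)"
  unfolding marked_point_def
  using assms by (intro prob_space_pair prob_space_uniform_measure prob_space_axioms) (simp_all add: emeasure_torus_box)

lemma emeasure_marked_point:
  assumes "n > 0" and A: "A \<in> sets (borel \<Otimes>\<^sub>M borel :: ((real^'d) \<times> real) measure)"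
  shows "emeasure (marked_point n \<mu>) A
    = (\<integral>\<^sup>+x\<in>torus_box n. emeasure \<mu> (Pair x -` A) \<partial>lborel) / ennreal (real n ^ CARD('d))"
proof -
  let ?U = "uniform_measure lborel (torus_box n :: (real^'d) set)"
  have A': "A \<in> sets (?U \<Otimes>\<^sub>M \<mu>)"
    using A unfolding sets_marked_point[of n, unfolded marked_point_def] .
  have "(\<lambda>x. emeasure \<mu> (Pair x -` A)) \<in> borel_measurable lborel"
    using measurable_emeasure_Pair[OF A'] unfolding measurable_cong_sets[OF sets_uniform_measure refl] .
  then have "(\<integral>\<^sup>+x. emeasure \<mu> (Pair x -` A) \<partial>?U)
      = (\<integral>\<^sup>+x\<in>torus_box n. emeasure \<mu> (Pair x -` A) \<partial>lborel) / emeasure lborel (torus_box n :: (real^'d) set)"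
    by (rule nn_integral_uniform_measure) simp
  then show ?thesis
    unfolding marked_point_def emeasure_pair_measure_alt[OF A'] emeasure_torus_box .
qed

lemma ppp_prob_subset:
  assumes "n > 0" and A: "A \<in> sets (borel \<Otimes>\<^sub>M borel :: ((real^'d) \<times> real) measure)"
  shows "ppp_prob TYPE('d) n \<mu> (\<lambda>\<phi>. \<phi> \<subseteq> A)
    = exp (- (real n ^ CARD('d) * (1 - measure (marked_point n \<mu>) A)))"
proof -
  let ?v = "real n ^ CARD('d)" and ?p = "measure (marked_point n \<mu>) A"
  interpret P: prob_space "marked_point n \<mu> :: ((real^'d) \<times> real) measure"
    by (rule prob_space_marked_point[OF assms(1)])
  have "(\<lambda>k. exp (- ?v) * ((?v * ?p) ^ k /\<^sub>R fact k)) sums (exp (- ?v) * exp (?v * ?p))"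
    by (intro sums_mult exp_converges)
  moreover have "exp (- ?v) * exp (?v * ?p) = exp (- (?v * (1 - ?p)))"
    by (simp add: exp_add[symmetric] algebra_simps)
  ultimately show ?thesis
    using A unfolding ppp_prob_def
    by (simp add: P.measure_PiM_image_subset sets_marked_point power_mult_distrib sums_iff field_simps)
qed

lemma link_mass_torus_box_finite: "link_mass \<mu> r (torus_box n :: (real^'d) set) < \<top>"
  using link_mass_le_emeasure[OF prob_space_axioms torus_box_sets[where 'd='d], of r n]
  by (simp add: emeasure_torus_box le_less_trans)

lemma measure_compl_isolating_points:
  assumes "n > 0"
  shows "real n ^ CARD('d) * measure (marked_point n \<mu>) (- isolating_points n r :: ((real^'d) \<times> real) set)
    = enn2real (link_mass \<mu> r (torus_box n :: (real^'d) set))"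
proof -
  have C: "- isolating_points n r \<in> sets (borel \<Otimes>\<^sub>M borel :: ((real^'d) \<times> real) measure)"
    using sets.compl_sets[OF isolating_points_sets[OF assms]] by (simp add: space_pair_measure Compl_eq_Diff_UNIV)
  have "(\<integral>\<^sup>+x\<in>torus_box n. emeasure \<mu> (Pair (x :: real^'d) -` (- isolating_points n r)) \<partial>lborel)
      = link_mass \<mu> r (torus_box n :: (real^'d) set)"
    unfolding link_mass_def
  proof (intro nn_integral_cong_AE)
    show "AE x in lborel. emeasure \<mu> (Pair (x :: real^'d) -` (- isolating_points n r)) * indicator (torus_box n) x
        = emeasure \<mu> {t. norm x \<le> r \<or> norm x \<le> t} * indicator (torus_box n) x"
      using AE_lborel_singleton[of "0 :: real^'d"]
      by eventually_elim (simp add: vimage_Pair_compl_isolating_points[OF assms] split: split_indicator)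
  qed
  moreover obtain l where "link_mass \<mu> r (torus_box n :: (real^'d) set) = ennreal l" and "0 \<le> l"
    using link_mass_torus_box_finite[of r n, where 'd='d] by (cases "link_mass \<mu> r (torus_box n :: (real^'d) set)") auto
  ultimately show ?thesis
    using assms by (simp add: measure_def emeasure_marked_point[OF assms C] divide_ennreal)
qed

lemma ppp_prob_isolated:
  assumes "n > 0"
  shows "ppp_prob TYPE('d) n \<mu> (\<lambda>\<phi>. isolated n (\<phi> \<union> {(0 :: real^'d, r)}) (0, r))
    = exp (- enn2real (link_mass \<mu> r (torus_box n :: (real^'d) set)))"
proof -
  interpret P: prob_space "marked_point n \<mu> :: ((real^'d) \<times> real) measure"
    by (rule prob_space_marked_point[OF assms])
  have "measure (marked_point n \<mu>) (- isolating_points n r :: ((real^'d) \<times> real) set) = 1 - measure (marked_point n \<mu>) (isolating_points n r :: ((real^'d) \<times> real) set)"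
  proof -
    have "isolating_points n r \<in> sets (marked_point n \<mu> :: ((real^'d) \<times> real) measure)"
      by (simp add: sets_marked_point isolating_points_sets[OF assms])
    then show ?thesis by (simp add: P.prob_compl[symmetric] space_marked_point Compl_eq_Diff_UNIV)
  qed
  then show ?thesis
    unfolding isolated_iff_subset_isolating_points ppp_prob_subset[OF assms isolating_points_sets[OF assms]]
    using measure_compl_isolating_points[OF assms, of r, where 'd='d] by (simp only:)
qed

lemma iso_prob_eq:
  assumes "n > 0"
  shows "iso_prob TYPE('d) n \<mu> = (\<integral>r. exp (- enn2real (link_mass \<mu> r (torus_box n :: (real^'d) set))) \<partial>\<mu>)"
  unfolding iso_prob_def ppp_prob_isolated[OF assms] ..

lemma borel_measurable_link_mass:
  assumes "S \<in> sets borel" and "emeasure lborel S < \<infinity>"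
  shows "(\<lambda>r. enn2real (link_mass \<mu> r S)) \<in> borel_measurable \<mu>"
proof -
  have "link_mass \<mu> r S < \<infinity>" for r
    using link_mass_le_emeasure[OF prob_space_axioms assms(1)] assms(2) by (rule le_less_trans)
  then have "mono (\<lambda>r. enn2real (link_mass \<mu> r S))"
    by (intro monoI enn2real_mono link_mass_mono[OF sets_eq_borel]) simp_all
  then show ?thesis
    unfolding measurable_cong_sets[OF sets_eq_borel refl] by (rule borel_measurable_mono)
qed

lemma integrable_exp_neg_link_mass:
  assumes "S \<in> sets borel" and "emeasure lborel S < \<infinity>"
  shows "integrable \<mu> (\<lambda>r. exp (- enn2real (link_mass \<mu> r S)))"
  using borel_measurable_link_mass[OF assms] by (intro integrable_const_bound[where B=1]) auto

lemma iso_prob_antimono: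
  assumes "0 < m" and "m \<le> n"
  shows "iso_prob TYPE('d::finite) n \<mu> \<le> iso_prob TYPE('d) m \<mu>"
proof -
  have fin: "emeasure lborel (torus_box k :: (real^'d) set) < \<infinity>" for k
    by (simp add: emeasure_torus_box)
  have "link_mass \<mu> r (torus_box m :: (real^'d) set) \<le> link_mass \<mu> r (torus_box n :: (real^'d) set)" for r
    by (intro link_mass_mono[OF sets_eq_borel] torus_box_mono assms(2) order_refl)
  then have "enn2real (link_mass \<mu> r (torus_box m :: (real^'d) set))
      \<le> enn2real (link_mass \<mu> r (torus_box n :: (real^'d) set))" for r
    using link_mass_torus_box_finite by (rule enn2real_mono)
  moreover have "n > 0" using assms by simp
  ultimately show ?thesis
    unfolding iso_prob_eq[OF assms(1)] iso_prob_eq[OF \<open>n > 0\<close>]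
    by (intro integral_mono integrable_exp_neg_link_mass torus_box_sets fin) auto
qed

lemma iso_prob_lower_bound:
  assumes "(\<integral>\<^sup>+t. ennreal (\<bar>t\<bar> ^ CARD('d::finite)) \<partial>\<mu>) < \<infinity>"
  obtains c where "c > 0" and "\<And>n. n > 0 \<Longrightarrow> c \<le> iso_prob TYPE('d::finite) n \<mu>"
proof -
  let ?\<kappa> = "unit_ball_vol (real CARD('d))"
  have "(\<integral>\<^sup>+t. ennreal (\<bar>t\<bar> ^ DIM(real^'d)) \<partial>\<mu>) < \<infinity>"
    using assms by simp
  then obtain m where "m \<ge> 0" and bound:
    "\<And>r (S :: (real^'d) set). enn2real (link_mass \<mu> r S) \<le> ?\<kappa> * \<bar>r\<bar> ^ CARD('d) + m"
    using link_mass_bounded[OF prob_space_axioms sets_eq_borel] by (metis DIM_cart DIM_real mult_1_right)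
  let ?K = "\<lambda>r. ?\<kappa> * \<bar>r\<bar> ^ CARD('d) + m"
  have "(\<lambda>r. exp (- ?K r)) \<in> borel_measurable \<mu>"
    unfolding measurable_cong_sets[OF sets_eq_borel refl] by measurable
  moreover have "norm (exp (- ?K r)) \<le> 1" for r
  proof -
    have "0 \<le> ?\<kappa> * \<bar>r\<bar> ^ CARD('d)" by simp
    with \<open>m \<ge> 0\<close> have "?K r \<ge> 0" by linarith
    then show ?thesis by simp
  qed
  ultimately have K: "integrable \<mu> (\<lambda>r. exp (- ?K r))"
    by (intro integrable_const_bound[where B=1] AE_I2)
  show ?thesis
  proof
    show "(\<integral>r. exp (- ?K r) \<partial>\<mu>) > 0" using K by (rule integral_pos) simp
    fix n :: nat assume "n > 0"
    have "exp (- ?K r) \<le> exp (- enn2real (link_mass \<mu> r (torus_box n :: (real^'d) set)))" for r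
      using bound[of r "torus_box n"] by simp
    then show "(\<integral>r. exp (- ?K r) \<partial>\<mu>) \<le> iso_prob TYPE('d) n \<mu>"
      unfolding iso_prob_eq[OF \<open>n > 0\<close>]
      by (intro integral_mono K integrable_exp_neg_link_mass torus_box_sets) (simp_all add: emeasure_torus_box)
  qed
qed

end

theorem proposition4p1:
  fixes \<mu> :: "real measure" and \<beta> s :: real
  assumes "CARD('d::finite) \<ge> 2"
    and "prob_space \<mu>" and "sets \<mu> = sets borel"
    and "emeasure \<mu> {..<0} = 0"
    and "absolutely_continuous lborel \<mu>"
    and "\<beta> > 0" and "s > 0"
    and "((\<lambda>h. h powr s * measure \<mu> {h<..}) \<longlongrightarrow> \<beta>) at_top"
    and "s > real CARD('d)"
  shows "\<exists>L. (\<lambda>n. iso_prob TYPE('d) n \<mu>) \<longlonglongrightarrow> L \<and> L > 0"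
proof -
  interpret mark_law \<mu>
    using assms(2,3) by (simp add: mark_law_def mark_law_axioms_def)
  have "AE t in \<mu>. t \<ge> 0"
    using assms(4) by (intro AE_I'[of "{..<0}"]) (auto simp: null_sets_def sets_eq_borel)
  moreover have "eventually (\<lambda>h. h powr s * measure \<mu> {h<..} \<le> \<beta> + 1) at_top"
    using order_tendstoD(2)[OF assms(8), of "\<beta> + 1"] by (auto elim: eventually_mono)
  ultimately have "(\<integral>\<^sup>+t. ennreal (\<bar>t\<bar> ^ CARD('d)) \<partial>\<mu>) < \<infinity>"
    using assms(9) by (intro nn_integral_power_finite[OF finite_measure_axioms sets_eq_borel])
  then obtain c where "c > 0" and c: "\<And>n. n > 0 \<Longrightarrow> c \<le> iso_prob TYPE('d) n \<mu>"
    using iso_prob_lower_bound by blast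
  have "decseq (\<lambda>k. iso_prob TYPE('d) (Suc k) \<mu>)"
    by (intro decseq_SucI iso_prob_antimono) simp_all
  then obtain L where L: "(\<lambda>k. iso_prob TYPE('d) (Suc k) \<mu>) \<longlonglongrightarrow> L"
    using decseq_convergent[of _ c] c by blast
  have "c \<le> L"
    using L c by (intro LIMSEQ_le_const) auto
  with \<open>c > 0\<close> L show ?thesis
    by (auto simp: filterlim_sequentially_Suc[where f="\<lambda>n. iso_prob TYPE('d) n \<mu>", symmetric])
qed

end
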